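(* Let $\Omega\subset\mathbb{R}^N$ be an open set of finite measure and let $D_1,D_2\subset\Omega$ satisfy: $D_i$ is open, $\operatorname{int}(\overline{D_i})=D_i$ for $i=1,2$, $D_1\cap D_2=\emptyset$, and $\overline{\Omega}=\overline{D_1}\cup\overline{D_2}$. Let $1\le p_1,p_2<\infty$ and let $p=p_1\chi_{D_1}+p_2\chi_{D_2}$. Then $$u\in W^{1,p(x)}(\Omega)\iff u\in W^{1,p_1}(D_1),\ u\in W^{1,p_2}(D_2)\ \text{and}\ u\in W^{1,\min\{p_1,p_2\}}(\Omega).$$
   Context: For a measurable bounded exponent $p\colon\Omega\to[1,\infty)$, $L^{p(x)}(\Omega)$ is the space of $f\in L^1_{\mathrm{loc}}(\Omega)$ with $\int_\Omega|f|^{p(x)}\,dx<\infty$ (with the Luxemburg norm), and $W^{1,p(x)}(\Omega)$ is the space of $u\in W^{1,1}_{\mathrm{loc}}(\Omega)$ such that $u$ and all weak partial derivatives $\partial_iu$ belong to $L^{p(x)}(\Omega)$.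
   Formalization: On the part of $\Omega$ outside $D_1$ and $D_2$, the exponent $p$ equals $\min\{p_1,p_2\}$ instead of the value 0 given by $p=p_1\chi_{D_1}+p_2\chi_{D_2}$. The statement above fails without it. *)

theory Defs
  imports "HOL-Analysis.Analysis"
begin

text \<open>Euclidean space R^N is modelled by an arbitrary type 'a of class euclidean_space
  (N = DIM('a)); coordinate directions are the elements of Basis.\<close>

fun iter_partial :: "'a::euclidean_space list \<Rightarrow> ('a \<Rightarrow> real) \<Rightarrow> 'a \<Rightarrow> real" where
  "iter_partial [] f = f"
| "iter_partial (b # bs) f = (\<lambda>x. frechet_derivative (iter_partial bs f) (at x) b)"

definition smooth_fun :: "('a::euclidean_space \<Rightarrow> real) \<Rightarrow> bool" where
  "smooth_fun f \<longleftrightarrow> (\<forall>bs. set bs \<subseteq> Basis \<longrightarrow> (\<forall>x. iter_partial bs f differentiable (at x)))"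

definition test_fun :: "'a::euclidean_space set \<Rightarrow> ('a \<Rightarrow> real) \<Rightarrow> bool" where
  "test_fun \<Omega> \<phi> \<longleftrightarrow> smooth_fun \<phi> \<and> compact (closure {x. \<phi> x \<noteq> 0})
      \<and> closure {x. \<phi> x \<noteq> 0} \<subseteq> \<Omega>"

definition L1_loc :: "'a::euclidean_space set \<Rightarrow> ('a \<Rightarrow> real) \<Rightarrow> bool" where
  "L1_loc \<Omega> f \<longleftrightarrow> (\<forall>K. compact K \<and> K \<subseteq> \<Omega> \<longrightarrow> set_integrable lebesgue K f)"

definition weak_partial :: "'a::euclidean_space set \<Rightarrow> 'a \<Rightarrow> ('a \<Rightarrow> real) \<Rightarrow> ('a \<Rightarrow> real) \<Rightarrow> bool" where
  "weak_partial \<Omega> b u g \<longleftrightarrow>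
     (\<forall>\<phi>. test_fun \<Omega> \<phi> \<longrightarrow>
        (LINT x:\<Omega>|lebesgue. u x * frechet_derivative \<phi> (at x) b)
          = - (LINT x:\<Omega>|lebesgue. g x * \<phi> x))"

definition Lp_var :: "'a::euclidean_space set \<Rightarrow> ('a \<Rightarrow> real) \<Rightarrow> ('a \<Rightarrow> real) \<Rightarrow> bool" where
  "Lp_var \<Omega> p f \<longleftrightarrow> L1_loc \<Omega> f \<and>
     set_nn_integral lebesgue \<Omega> (\<lambda>x. ennreal (\<bar>f x\<bar> powr p x)) < \<infinity>"

definition W1p_var :: "'a::euclidean_space set \<Rightarrow> ('a \<Rightarrow> real) \<Rightarrow> ('a \<Rightarrow> real) \<Rightarrow> bool" where
  "W1p_var \<Omega> p u \<longleftrightarrow> L1_loc \<Omega> u \<and> Lp_var \<Omega> p u \<and>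
     (\<forall>b\<in>Basis. \<exists>g. L1_loc \<Omega> g \<and> weak_partial \<Omega> b u g \<and> Lp_var \<Omega> p g)"

definition W1p :: "'a::euclidean_space set \<Rightarrow> real \<Rightarrow> ('a \<Rightarrow> real) \<Rightarrow> bool" where
  "W1p \<Omega> q u \<longleftrightarrow> W1p_var \<Omega> (\<lambda>_. q) u"

text \<open>The exponent p = p1 chi_D1 + p2 chi_D2; on the interface Omega - (D1 u D2), where the
  paper's formula gives no value in [1,oo), we use the convention min p1 p2.\<close>
definition two_phase_exp :: "'a set \<Rightarrow> 'a set \<Rightarrow> real \<Rightarrow> real \<Rightarrow> 'a \<Rightarrow> real" where
  "two_phase_exp D1 D2 p1 p2 x =
     (if x \<in> D1 then p1 else if x \<in> D2 then p2 else min p1 p2)"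

end

theory Submission
  imports Defs
begin

text \<open>
  If \<open>u \<in> W^{1,p(x)}(\<Omega>)\<close>, the exponent is constant on each \<open>D_i\<close>, which gives the
  restrictions; and since \<open>|f|^q \<le> 1 + |f|^{p(x)}\<close> whenever \<open>0 \<le> q \<le> p(x)\<close>, the finite measure
  of \<open>\<Omega>\<close> gives \<open>W^{1,p(x)}(\<Omega>) \<subseteq> W^{1,min p_1 p_2}(\<Omega>)\<close>.
  Conversely, weak derivatives are unique almost everywhere (fundamental lemma of the calculus of
  variations, proved by approximating indicators of boxes by smooth bumps built from
  \<open>exp (-1/t)\<close>), so the weak gradient of \<open>u\<close> on \<open>\<Omega>\<close> agrees with those on \<open>D_1\<close> and \<open>D_2\<close>.
  The \<open>p(x)\<close>-modular over \<open>\<Omega>\<close> is then bounded by the \<open>p_1\<close>-modular over \<open>D_1\<close>, the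
  \<open>p_2\<close>-modular over \<open>D_2\<close> and the \<open>min p_1 p_2\<close>-modular over the interface.
\<close>

definition exp_inv_pow :: "nat \<Rightarrow> real \<Rightarrow> real" where
  "exp_inv_pow k t = (if 0 < t then exp (- inverse t) * inverse t ^ k else 0)"

lemma exp_inv_pow_0: "exp_inv_pow 0 t = (if 0 < t then exp (- inverse t) else 0)"
  by (simp add: exp_inv_pow_def)

lemma exp_inv_pow_0_nonneg: "0 \<le> exp_inv_pow 0 t"
  by (simp add: exp_inv_pow_0)

lemma exp_inv_pow_0_le_1: "exp_inv_pow 0 t \<le> 1"
  by (simp add: exp_inv_pow_0)

lemma exp_inv_pow_0_eq_0_iff: "exp_inv_pow 0 t = 0 \<longleftrightarrow> t \<le> 0"
  by (simp add: exp_inv_pow_0)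

lemma exp_inv_pow_tendsto_0: "(exp_inv_pow k \<longlongrightarrow> 0) (at 0)"
proof -
  have "((\<lambda>s::real. s ^ k / exp s) \<longlongrightarrow> 0) at_top"
    by (rule tendsto_power_div_exp_0)
  then have "((\<lambda>t. inverse t ^ k / exp (inverse t)) \<longlongrightarrow> 0) (at_right (0::real))"
    using filterlim_compose filterlim_inverse_at_top_right by blast
  then have "((\<lambda>t. exp (- inverse t) * inverse t ^ k) \<longlongrightarrow> 0) (at_right (0::real))"
    by (simp add: exp_minus field_simps)
  then have right: "(exp_inv_pow k \<longlongrightarrow> 0) (at_right 0)"
    by (rule Lim_transform_eventually) (auto simp: exp_inv_pow_def eventually_at_filter)
  have left: "(exp_inv_pow k \<longlongrightarrow> 0) (at_left 0)"
    by (rule Lim_transform_eventually[of "\<lambda>_. 0"]) (auto simp: exp_inv_pow_def eventually_at_filter)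
  show ?thesis
    using right left by (simp add: filterlim_split_at)
qed

lemma exp_inv_pow_has_real_derivative:
  "(exp_inv_pow k has_real_derivative
     (exp_inv_pow (k + 2) t - real k * exp_inv_pow (k + 1) t)) (at t)"
proof -
  consider "t > 0" | "t < 0" | "t = 0" by linarith
  then show ?thesis
  proof cases
    case 1
    have "((\<lambda>t. exp (- inverse t) * inverse t ^ k) has_real_derivative
        exp (- inverse t) * inverse t ^ 2 * inverse t ^ k
          + exp (- inverse t) * (real k * inverse t ^ (k - 1) * - (inverse t ^ 2))) (at t)"
      using 1 by (auto intro!: derivative_eq_intros simp: power2_eq_square)
    moreover have "exp (- inverse t) * inverse t ^ 2 * inverse t ^ k
          + exp (- inverse t) * (real k * inverse t ^ (k - 1) * - (inverse t ^ 2))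
        = exp_inv_pow (k + 2) t - real k * exp_inv_pow (k + 1) t"
      using 1 by (cases k) (auto simp: exp_inv_pow_def field_simps power2_eq_square)
    ultimately have "((\<lambda>t. exp (- inverse t) * inverse t ^ k) has_real_derivative
        exp_inv_pow (k + 2) t - real k * exp_inv_pow (k + 1) t) (at t)"
      by simp
    from has_field_derivative_transform_within_open[OF this, of "{0<..}"] 1 show ?thesis
      by (auto simp: exp_inv_pow_def)
  next
    case 2
    have "((\<lambda>t. 0) has_real_derivative
        exp_inv_pow (k + 2) t - real k * exp_inv_pow (k + 1) t) (at t)"
      using 2 by (auto simp: exp_inv_pow_def intro!: derivative_eq_intros)
    from has_field_derivative_transform_within_open[OF this, of "{..<0}"] 2 show ?thesis
      by (auto simp: exp_inv_pow_def)
  next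
    case 3
    have "((\<lambda>x. (exp_inv_pow k x - exp_inv_pow k 0) / (x - 0)) \<longlongrightarrow> 0) (at 0)"
      by (rule Lim_transform_eventually[OF exp_inv_pow_tendsto_0[of "Suc k"]])
        (auto simp: exp_inv_pow_def eventually_at_filter field_simps)
    then show ?thesis
      using 3 by (simp add: has_field_derivative_iff exp_inv_pow_def)
  qed
qed

text \<open>Smoothness of bump functions is proved by closing this class under partial derivatives.\<close>

inductive_set ridge_algebra :: "('a::euclidean_space \<Rightarrow> real) set" where
  const: "(\<lambda>x. c) \<in> ridge_algebra"
| ridge: "(\<lambda>x. exp_inv_pow k (v \<bullet> x + d)) \<in> ridge_algebra"
| add: "f \<in> ridge_algebra \<Longrightarrow> g \<in> ridge_algebra \<Longrightarrow> (\<lambda>x. f x + g x) \<in> ridge_algebra"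
| mult: "f \<in> ridge_algebra \<Longrightarrow> g \<in> ridge_algebra \<Longrightarrow> (\<lambda>x. f x * g x) \<in> ridge_algebra"

lemma ridge_algebra_diff:
  assumes "f \<in> ridge_algebra" "g \<in> ridge_algebra"
  shows "(\<lambda>x. f x - g x) \<in> ridge_algebra"
proof -
  have "(\<lambda>x. f x + (- 1) * g x) \<in> ridge_algebra"
    using assms by (intro ridge_algebra.add ridge_algebra.mult ridge_algebra.const)
  then show ?thesis by simp
qed

lemma ridge_algebra_prod:
  "finite I \<Longrightarrow> (\<And>i. i \<in> I \<Longrightarrow> f i \<in> ridge_algebra) \<Longrightarrow> (\<lambda>x. \<Prod>i\<in>I. f i x) \<in> ridge_algebra"
  by (induction I rule: finite_induct) (simp_all add: ridge_algebra.const ridge_algebra.mult)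

lemma ridge_algebra_has_derivative:
  assumes "f \<in> ridge_algebra"
  shows "\<exists>f'. (\<forall>x. (f has_derivative f' x) (at x)) \<and> (\<forall>b. (\<lambda>x. f' x b) \<in> ridge_algebra)"
  using assms
proof induction
  case (const c)
  show ?case
    by (rule exI[of _ "\<lambda>x h. 0"]) (auto intro: ridge_algebra.const)
next
  case (ridge k v d)
  define D where "D y = exp_inv_pow (k + 2) y - real k * exp_inv_pow (k + 1) y" for y
  have "((\<lambda>x. exp_inv_pow k (v \<bullet> x + d)) has_derivative (\<lambda>h. D (v \<bullet> x + d) * (v \<bullet> h))) (at x)"
    for x
  proof -
    have inner: "((\<lambda>x. v \<bullet> x + d) has_derivative (\<lambda>h. v \<bullet> h)) (at x)"
      by (auto intro!: derivative_eq_intros)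
    have outer: "(exp_inv_pow k has_derivative (*) (D (v \<bullet> x + d))) (at (v \<bullet> x + d))"
      using exp_inv_pow_has_real_derivative unfolding has_field_derivative_def D_def .
    show ?thesis
      using has_derivative_compose[OF inner outer] by (simp add: o_def)
  qed
  moreover have "(\<lambda>x. D (v \<bullet> x + d) * (v \<bullet> b)) \<in> ridge_algebra" for b
    unfolding D_def
    by (intro ridge_algebra.mult ridge_algebra_diff ridge_algebra.const ridge_algebra.ridge)
  ultimately show ?case
    by (intro exI[of _ "\<lambda>x h. D (v \<bullet> x + d) * (v \<bullet> h)"]) auto
next
  case (add f g)
  then obtain f' g' where
    "\<forall>x. (f has_derivative f' x) (at x)" "\<forall>b. (\<lambda>x. f' x b) \<in> ridge_algebra"
    "\<forall>x. (g has_derivative g' x) (at x)" "\<forall>b. (\<lambda>x. g' x b) \<in> ridge_algebra"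
    by blast
  then show ?case
    by (intro exI[of _ "\<lambda>x h. f' x h + g' x h"]) (auto intro!: has_derivative_add ridge_algebra.add)
next
  case (mult f g)
  then obtain f' g' where
    "\<forall>x. (f has_derivative f' x) (at x)" "\<forall>b. (\<lambda>x. f' x b) \<in> ridge_algebra"
    "\<forall>x. (g has_derivative g' x) (at x)" "\<forall>b. (\<lambda>x. g' x b) \<in> ridge_algebra"
    by blast
  with mult.hyps show ?case
    by (intro exI[of _ "\<lambda>x h. f x * g' x h + f' x h * g x"])
      (auto intro!: has_derivative_mult ridge_algebra.add ridge_algebra.mult)
qed

lemma iter_partial_ridge_algebra: "f \<in> ridge_algebra \<Longrightarrow> iter_partial bs f \<in> ridge_algebra"
proof (induction bs)
  case (Cons b bs)
  then have "iter_partial bs f \<in> ridge_algebra" by simp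
  then obtain f' where
    f': "\<forall>x. (iter_partial bs f has_derivative f' x) (at x)" "\<forall>b. (\<lambda>x. f' x b) \<in> ridge_algebra"
    using ridge_algebra_has_derivative by blast
  then have "(\<lambda>x. frechet_derivative (iter_partial bs f) (at x) b) = (\<lambda>x. f' x b)"
    using frechet_derivative_at by metis
  with f' show ?case by simp
qed simp

lemma smooth_fun_ridge_algebra: "f \<in> ridge_algebra \<Longrightarrow> smooth_fun f"
  unfolding smooth_fun_def differentiable_def
  using ridge_algebra_has_derivative[OF iter_partial_ridge_algebra] by blast

lemma ridge_algebra_borel_measurable:
  assumes "f \<in> ridge_algebra"
  shows "f \<in> borel_measurable lebesgue"
proof -
  from ridge_algebra_has_derivative[OF assms] have "continuous_on UNIV f"
    by (meson continuous_at_imp_continuous_on has_derivative_continuous)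
  then have "f \<in> borel_measurable lborel"
    using borel_measurable_continuous_onI by simp
  then show ?thesis
    using measurable_completion by blast
qed

definition box_bump :: "nat \<Rightarrow> 'a \<Rightarrow> 'a \<Rightarrow> 'a::euclidean_space \<Rightarrow> real" where
  "box_bump n a b x =
     (\<Prod>i\<in>Basis. exp_inv_pow 0 (real n * (x \<bullet> i - a \<bullet> i)) * exp_inv_pow 0 (real n * (b \<bullet> i - x \<bullet> i)))"

lemma box_bump_ridge_algebra: "box_bump n a b \<in> ridge_algebra"
proof -
  have "(\<lambda>x. \<Prod>i\<in>Basis. exp_inv_pow 0 ((real n *\<^sub>R i) \<bullet> x + - (real n * (a \<bullet> i)))
      * exp_inv_pow 0 ((- (real n *\<^sub>R i)) \<bullet> x + real n * (b \<bullet> i))) \<in> ridge_algebra"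
    by (intro ridge_algebra_prod ridge_algebra.mult ridge_algebra.ridge) auto
  moreover have "(\<lambda>x. \<Prod>i\<in>Basis. exp_inv_pow 0 ((real n *\<^sub>R i) \<bullet> x + - (real n * (a \<bullet> i)))
      * exp_inv_pow 0 ((- (real n *\<^sub>R i)) \<bullet> x + real n * (b \<bullet> i))) = box_bump n a b"
    unfolding box_bump_def by (intro ext prod.cong refl) (simp add: algebra_simps inner_commute)
  ultimately show ?thesis by simp
qed

lemma box_bump_nonneg: "0 \<le> box_bump n a b x"
  unfolding box_bump_def by (intro prod_nonneg mult_nonneg_nonneg exp_inv_pow_0_nonneg)

lemma box_bump_le_1: "box_bump n a b x \<le> 1"
  unfolding box_bump_def
  by (intro prod_le_1 conjI mult_nonneg_nonneg mult_le_one exp_inv_pow_0_nonneg exp_inv_pow_0_le_1)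

lemma box_bump_neq_0_iff: "box_bump (Suc n) a b x \<noteq> 0 \<longleftrightarrow> x \<in> box a b"
  unfolding box_bump_def mem_box by (auto simp: exp_inv_pow_0_eq_0_iff mult_le_0_iff)

lemma box_bump_tendsto_indicator: "(\<lambda>n. box_bump (Suc n) a b x) \<longlonglongrightarrow> indicator (box a b) x"
proof (cases "x \<in> box a b")
  case True
  have step: "(\<lambda>n. exp_inv_pow 0 (real (Suc n) * t)) \<longlonglongrightarrow> 1" if "t > 0" for t
  proof -
    have "(\<lambda>n. exp (- (inverse t * inverse (real (Suc n))))) \<longlonglongrightarrow> exp (- (inverse t * 0))"
      by (intro tendsto_exp tendsto_minus tendsto_mult tendsto_const LIMSEQ_inverse_real_of_nat)
    moreover have "exp_inv_pow 0 (real (Suc n) * t) = exp (- (inverse t * inverse (real (Suc n))))"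
      for n
      using that by (simp add: exp_inv_pow_0 mult.commute)
    ultimately show ?thesis by simp
  qed
  have "(\<lambda>n. box_bump (Suc n) a b x) \<longlonglongrightarrow> (\<Prod>i\<in>(Basis::'a set). 1 * 1)"
    unfolding box_bump_def
    by (intro tendsto_prod tendsto_mult step) (use True in \<open>auto simp: mem_box\<close>)
  with True show ?thesis by simp
next
  case False
  then have "box_bump (Suc n) a b x = 0" for n
    using box_bump_neq_0_iff by blast
  with False show ?thesis by simp
qed

lemma test_fun_box_bump: "closure (box a b) \<subseteq> U \<Longrightarrow> test_fun U (box_bump (Suc n) a b)"
proof -
  assume "closure (box a b) \<subseteq> U"
  moreover have "{x. box_bump (Suc n) a b x \<noteq> 0} = box a b"
    using box_bump_neq_0_iff by auto
  ultimately show ?thesis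
    unfolding test_fun_def
    using smooth_fun_ridge_algebra[OF box_bump_ridge_algebra] by (simp add: compact_closure)
qed

lemma set_integral_zero_iff_density_eq:
  fixes g :: "'a \<Rightarrow> real"
  assumes int: "integrable M g" and A: "A \<in> sets M"
  shows "(\<integral>x. indicator A x * g x \<partial>M) = 0 \<longleftrightarrow>
    emeasure (density M (\<lambda>x. ennreal (g x))) A = emeasure (density M (\<lambda>x. ennreal (- g x))) A"
proof -
  have [measurable]: "g \<in> borel_measurable M"
    using int by auto
  have fin: "(\<integral>\<^sup>+x. ennreal (c * g x) * indicator A x \<partial>M) < \<infinity>" if "c = 1 \<or> c = -1" for c
  proof -
    have "(\<integral>\<^sup>+x. ennreal (c * g x) * indicator A x \<partial>M) \<le> (\<integral>\<^sup>+x. ennreal (c * g x) \<partial>M)"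
      by (intro nn_integral_mono) (auto simp: indicator_def)
    also have "\<dots> < \<infinity>"
      using int that unfolding real_integrable_def by (auto simp: less_top)
    finally show ?thesis .
  qed
  have "(\<integral>x. indicator A x * g x \<partial>M) =
      enn2real (\<integral>\<^sup>+x. ennreal (g x) * indicator A x \<partial>M)
        - enn2real (\<integral>\<^sup>+x. ennreal (- g x) * indicator A x \<partial>M)"
  proof -
    have int_A: "integrable M (\<lambda>x. indicator A x * g x)"
      using integrable_mult_indicator[OF A int] by (simp add: mult.commute)
    have "(\<integral>\<^sup>+x. ennreal (indicator A x * g x) \<partial>M) = (\<integral>\<^sup>+x. ennreal (g x) * indicator A x \<partial>M)"
      "(\<integral>\<^sup>+x. ennreal (- (indicator A x * g x)) \<partial>M) = (\<integral>\<^sup>+x. ennreal (- g x) * indicator A x \<partial>M)"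
      by (auto intro!: nn_integral_cong simp: indicator_def)
    then show ?thesis
      using real_lebesgue_integral_def[OF int_A] by simp
  qed
  moreover have "enn2real X = enn2real Y \<longleftrightarrow> X = Y" if "X < \<infinity>" "Y < \<infinity>" for X Y :: ennreal
    using that by (metis ennreal_enn2real infinity_ennreal_def)
  ultimately show ?thesis
    using fin[of 1] fin[of "-1"] A by (simp add: emeasure_density)
qed

text \<open>The densities of the positive and negative parts of \<open>g\<close> are finite measures that agree on
  the Int-stable generator of open boxes, hence on all Borel sets.\<close>

lemma AE_zero_if_box_integrals_zero_lborel:
  fixes g :: "'a::euclidean_space \<Rightarrow> real"
  assumes int: "integrable lborel g"
    and box_zero: "\<And>a b. (\<integral>x. indicator (box a b) x * g x \<partial>lborel) = 0"
  shows "AE x in lborel. g x = 0"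
proof -
  define E where "E = range (\<lambda>(a, b). box a b :: 'a set)"
  define C :: "nat \<Rightarrow> 'a set" where "C n = box (- (real n *\<^sub>R One)) (real n *\<^sub>R One)" for n
  have [measurable]: "g \<in> borel_measurable lborel"
    using int by auto
  have "density lborel (\<lambda>x. ennreal (g x)) = density lborel (\<lambda>x. ennreal (- g x))"
  proof (rule measure_eqI_generator_eq[where \<Omega>=UNIV and E=E and A=C])
    show "Int_stable E"
      by (auto simp: E_def Int_stable_def box_Int_box)
    show "sets (density lborel (\<lambda>x. ennreal (g x))) = sigma_sets UNIV E"
      "sets (density lborel (\<lambda>x. ennreal (- g x))) = sigma_sets UNIV E"
      by (simp_all add: E_def borel_eq_box)
    show "range C \<subseteq> E" "(\<Union>n. C n) = UNIV"
      unfolding E_def C_def UN_box_eq_UNIV by auto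
    show "emeasure (density lborel (\<lambda>x. ennreal (g x))) (C n) \<noteq> \<infinity>" for n
    proof -
      have "(\<integral>\<^sup>+x. ennreal (g x) * indicator (C n) x \<partial>lborel) \<le> (\<integral>\<^sup>+x. ennreal (g x) \<partial>lborel)"
        by (intro nn_integral_mono) (auto simp: indicator_def)
      also have "\<dots> < \<infinity>"
        using int unfolding real_integrable_def by (auto simp: less_top)
      finally show ?thesis
        by (simp add: emeasure_density C_def)
    qed
    show "E \<subseteq> Pow UNIV" by simp
    fix X assume "X \<in> E"
    then obtain a b where "X = box a b"
      by (auto simp: E_def)
    then show "emeasure (density lborel (\<lambda>x. ennreal (g x))) X
        = emeasure (density lborel (\<lambda>x. ennreal (- g x))) X"
      using set_integral_zero_iff_density_eq[OF int] box_zero by simp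
  qed
  then have "(\<integral>x. indicator A x * g x \<partial>lborel) = 0" if "A \<in> sets borel" for A
    using set_integral_zero_iff_density_eq[OF int] that by simp
  then show ?thesis
    by (intro density_unique_real[OF int, of "\<lambda>_. 0", simplified])
      (simp add: set_lebesgue_integral_def)
qed

lemma AE_zero_if_box_integrals_zero:
  fixes F :: "'a::euclidean_space \<Rightarrow> real"
  assumes int: "integrable lebesgue F"
    and box_zero: "\<And>a b. (\<integral>x. indicator (box a b) x * F x \<partial>lebesgue) = 0"
  shows "AE x in lebesgue. F x = 0"
proof -
  have "F \<in> borel_measurable lebesgue"
    using int by auto
  from completion_ex_borel_measurable_real[OF this] obtain g where
    g[measurable]: "g \<in> borel_measurable lborel" and ae_lborel: "AE x in lborel. F x = g x"
    by auto
  have ae: "AE x in lebesgue. F x = g x"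
    using ae_lborel by (rule AE_completion)
  have g_leb: "g \<in> borel_measurable lebesgue"
    using g measurable_completion by blast
  have "integrable lebesgue g"
    by (rule integrable_cong_AE_imp[OF int g_leb ae])
  then have "integrable lborel g"
    using integrable_completion[of g lborel] by simp
  moreover have "(\<integral>x. indicator (box a b) x * g x \<partial>lborel) = 0" for a b
  proof -
    have "(\<integral>x. indicator (box a b) x * g x \<partial>lborel) = (\<integral>x. indicator (box a b) x * g x \<partial>lebesgue)"
      by (rule integral_completion[symmetric]) simp
    also have "\<dots> = (\<integral>x. indicator (box a b) x * F x \<partial>lebesgue)"
      using ae \<open>F \<in> _\<close> g_leb
      by (intro integral_cong_AE borel_measurable_times borel_measurable_indicator) auto
    finally show ?thesis
      using box_zero by simp
  qed
  ultimately have "AE x in lborel. g x = 0"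
    by (rule AE_zero_if_box_integrals_zero_lborel)
  then have "AE x in lebesgue. g x = 0"
    by (rule AE_completion)
  with ae show ?thesis
    by eventually_elim simp
qed

lemma AE_on_open_if_AE_on_boxes:
  fixes U :: "'a::euclidean_space set"
  assumes U: "open U"
    and boxes: "\<And>a b. closure (box a b) \<subseteq> U \<Longrightarrow> AE x in lebesgue. x \<in> box a b \<longrightarrow> P x"
  shows "AE x in lebesgue. x \<in> U \<longrightarrow> P x"
proof -
  define \<F> where "\<F> = {box a b | a b :: 'a. closure (box a b) \<subseteq> U}"
  have U_cover: "U \<subseteq> \<Union>\<F>"
  proof
    fix x assume "x \<in> U"
    then obtain e where e: "e > 0" "ball x e \<subseteq> U"
      using U openE by blast
    then obtain a b where ab: "x \<in> box a b" "box a b \<subseteq> ball x (e / 2)"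
      using rational_boxes[of "e / 2" x] by auto
    have "closure (box a b) \<subseteq> cball x (e / 2)"
      using ab(2) ball_subset_cball closure_minimal closed_cball by (metis order_trans)
    also have "\<dots> \<subseteq> U"
      using e by (auto simp: subset_eq)
    finally show "x \<in> \<Union>\<F>"
      using ab(1) by (auto simp: \<F>_def)
  qed
  obtain \<F>' where \<F>': "\<F>' \<subseteq> \<F>" "countable \<F>'" "\<Union>\<F>' = \<Union>\<F>"
    using Lindelof[of \<F>] by (auto simp: \<F>_def)
  have "AE x in lebesgue. \<forall>B\<in>\<F>'. x \<in> B \<longrightarrow> P x"
    using \<F>' boxes by (intro AE_ball_countable') (auto simp: \<F>_def)
  then show ?thesis
    by (rule eventually_mono) (use U_cover \<F>'(3) in blast)
qed

lemma L1_loc_subset: "L1_loc \<Omega> f \<Longrightarrow> D \<subseteq> \<Omega> \<Longrightarrow> L1_loc D f"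
  unfolding L1_loc_def by auto

lemma L1_loc_borel_measurable:
  fixes f :: "'a::euclidean_space \<Rightarrow> real"
  assumes U: "open U" and L: "L1_loc U f"
  shows "(\<lambda>x. indicator U x * f x) \<in> borel_measurable lebesgue"
proof -
  obtain C where C: "\<And>n. compact (C n)" "\<And>n. C n \<subseteq> U" "\<And>n. C n \<subseteq> interior (C (Suc n))"
    "\<Union>(range C) = U"
    using open_Union_compact_subsets[OF U] by metis
  have "incseq C"
    using C(3) interior_subset by (intro incseq_SucI) blast
  have meas: "(\<lambda>x. indicator (C n) x * f x) \<in> borel_measurable lebesgue" for n
    using L C(1,2) unfolding L1_loc_def set_integrable_def by auto
  have lim: "(\<lambda>n. indicator (C n) x * f x) \<longlonglongrightarrow> indicator U x * f x" for x
  proof (cases "x \<in> U")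
    case True
    then obtain N where "x \<in> C N"
      using C(4) by blast
    then have "x \<in> C n" if "n \<ge> N" for n
      using \<open>incseq C\<close> that by (auto simp: incseq_def)
    with True have "\<forall>\<^sub>F n in sequentially. indicator U x * f x = indicator (C n) x * f x"
      by (auto simp: eventually_sequentially indicator_def)
    then show ?thesis
      by (rule Lim_transform_eventually[OF tendsto_const])
  next
    case False
    with C(2) have "x \<notin> C n" for n
      by blast
    with False show ?thesis by simp
  qed
  show ?thesis
    by (rule borel_measurable_LIMSEQ_real[OF lim meas])
qed

lemma test_fun_subset: "test_fun D \<phi> \<Longrightarrow> D \<subseteq> \<Omega> \<Longrightarrow> test_fun \<Omega> \<phi>"
  unfolding test_fun_def by auto

lemma test_fun_support: "test_fun U \<phi> \<Longrightarrow> \<phi> x \<noteq> 0 \<Longrightarrow> x \<in> U"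
  using closure_subset[of "{x. \<phi> x \<noteq> 0}"] unfolding test_fun_def by blast

lemma continuous_on_test_fun:
  assumes "test_fun U \<phi>"
  shows "continuous_on UNIV \<phi>"
proof -
  have "\<forall>x. iter_partial [] \<phi> differentiable (at x)"
    using assms unfolding test_fun_def smooth_fun_def by (simp only: set_simps empty_subsetI simp_thms)
  then show ?thesis
    by (simp add: continuous_at_imp_continuous_on differentiable_imp_continuous_within)
qed

lemma test_fun_borel_measurable:
  assumes "test_fun U \<phi>"
  shows "\<phi> \<in> borel_measurable lebesgue"
proof -
  have "\<phi> \<in> borel_measurable lborel"
    using continuous_on_test_fun[OF assms] borel_measurable_continuous_onI by simp
  then show ?thesis
    using measurable_completion by blast
qed

lemma frechet_derivative_test_fun_outside_support:
  assumes x: "x \<notin> closure {x. \<phi> x \<noteq> 0}"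
  shows "frechet_derivative \<phi> (at x) b = 0"
proof -
  have "((\<lambda>_. 0) has_derivative (\<lambda>h. 0)) (at x)"
    by simp
  then have "(\<phi> has_derivative (\<lambda>h. 0)) (at x)"
    by (rule has_derivative_transform_within_open[where s="- closure {x. \<phi> x \<noteq> 0}"])
      (use x closure_subset[of "{x. \<phi> x \<noteq> 0}"] in auto)
  then show ?thesis
    by (metis frechet_derivative_at)
qed

lemma test_fun_bounded:
  assumes T: "test_fun U \<phi>"
  obtains B where "\<And>x. \<bar>\<phi> x\<bar> \<le> B"
proof -
  define K where "K = closure {x. \<phi> x \<noteq> 0}"
  have "compact K"
    using T unfolding test_fun_def K_def by auto
  then have "bounded (\<phi> ` K)"
    using continuous_on_test_fun[OF T]
    by (intro compact_imp_bounded compact_continuous_image) (auto intro: continuous_on_subset)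
  then obtain B where B: "\<forall>y\<in>\<phi> ` K. norm y \<le> B"
    unfolding bounded_iff by blast
  have "\<bar>\<phi> x\<bar> \<le> \<bar>B\<bar>" for x
  proof (cases "x \<in> K")
    case True
    then show ?thesis using B by fastforce
  next
    case False
    then have "\<phi> x = 0"
      using closure_subset[of "{x. \<phi> x \<noteq> 0}"] unfolding K_def by blast
    then show ?thesis by simp
  qed
  then show ?thesis ..
qed

lemma set_integrable_mult_test_fun:
  fixes g :: "'a::euclidean_space \<Rightarrow> real"
  assumes L: "L1_loc U g" and T: "test_fun U \<phi>"
  shows "set_integrable lebesgue U (\<lambda>x. g x * \<phi> x)"
proof -
  define K where "K = closure {x. \<phi> x \<noteq> 0}"
  have K: "compact K" "K \<subseteq> U"
    using T unfolding test_fun_def K_def by auto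
  have "set_integrable lebesgue K g"
    using L K unfolding L1_loc_def by blast
  then have int_K: "integrable lebesgue (\<lambda>x. indicator K x * g x)"
    unfolding set_integrable_def by simp
  obtain B where B: "\<And>x. \<bar>\<phi> x\<bar> \<le> B"
    using test_fun_bounded[OF T] by blast
  have "integrable lebesgue (\<lambda>x. indicator K x * g x * \<phi> x)"
  proof (rule Bochner_Integration.integrable_bound)
    show "integrable lebesgue (\<lambda>x. B * (indicator K x * g x))"
      using int_K by (rule integrable_mult_right)
    show "(\<lambda>x. indicator K x * g x * \<phi> x) \<in> borel_measurable lebesgue"
      using borel_measurable_integrable[OF int_K] test_fun_borel_measurable[OF T]
      by (rule borel_measurable_times)
    show "AE x in lebesgue. norm (indicator K x * g x * \<phi> x) \<le> norm (B * (indicator K x * g x))"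
    proof (rule AE_I2)
      fix x
      have "\<bar>indicator K x * g x\<bar> * \<bar>\<phi> x\<bar> \<le> \<bar>indicator K x * g x\<bar> * B"
        by (intro mult_left_mono B) auto
      moreover have "0 \<le> B"
        using B[of x] by linarith
      ultimately show "norm (indicator K x * g x * \<phi> x) \<le> norm (B * (indicator K x * g x))"
        by (simp add: abs_mult mult.commute)
    qed
  qed
  moreover have "(\<lambda>x. indicator U x *\<^sub>R (g x * \<phi> x)) = (\<lambda>x. indicator K x * g x * \<phi> x)"
  proof (rule ext)
    fix x
    have "\<phi> x = 0" if "x \<notin> K"
      using that closure_subset[of "{x. \<phi> x \<noteq> 0}"] unfolding K_def by blast
    then show "indicator U x *\<^sub>R (g x * \<phi> x) = indicator K x * g x * \<phi> x"
      using K(2) by (cases "x \<in> K") (auto simp: indicator_def)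
  qed
  ultimately show ?thesis
    unfolding set_integrable_def by simp
qed

lemma tendsto_integral_box_bump:
  fixes h :: "'a::euclidean_space \<Rightarrow> real"
  assumes int: "integrable lebesgue h"
  shows "(\<lambda>n. \<integral>x. h x * box_bump (Suc n) a b x \<partial>lebesgue)
    \<longlonglongrightarrow> (\<integral>x. indicator (box a b) x * h x \<partial>lebesgue)"
proof (rule integral_dominated_convergence[where w="\<lambda>x. \<bar>h x\<bar>"])
  show "(\<lambda>x. indicator (box a b) x * h x) \<in> borel_measurable lebesgue"
    by (intro borel_measurable_times borel_measurable_indicator borel_measurable_integrable[OF int])
      auto
  show "(\<lambda>x. h x * box_bump (Suc n) a b x) \<in> borel_measurable lebesgue" for n
    by (intro borel_measurable_times borel_measurable_integrable[OF int]
        ridge_algebra_borel_measurable[OF box_bump_ridge_algebra])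
  show "integrable lebesgue (\<lambda>x. \<bar>h x\<bar>)"
    using int by (rule integrable_abs)
  show "AE x in lebesgue. (\<lambda>n. h x * box_bump (Suc n) a b x) \<longlonglongrightarrow> indicator (box a b) x * h x"
  proof (rule AE_I2)
    fix x
    have "(\<lambda>n. h x * box_bump (Suc n) a b x) \<longlonglongrightarrow> h x * indicator (box a b) x"
      by (intro tendsto_mult tendsto_const box_bump_tendsto_indicator)
    then show "(\<lambda>n. h x * box_bump (Suc n) a b x) \<longlonglongrightarrow> indicator (box a b) x * h x"
      by (simp add: mult.commute)
  qed
  show "AE x in lebesgue. norm (h x * box_bump (Suc n) a b x) \<le> \<bar>h x\<bar>" for n
  proof (rule AE_I2)
    fix x
    have "\<bar>h x\<bar> * box_bump (Suc n) a b x \<le> \<bar>h x\<bar> * 1"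
      by (intro mult_left_mono box_bump_le_1) auto
    then show "norm (h x * box_bump (Suc n) a b x) \<le> \<bar>h x\<bar>"
      using box_bump_nonneg[of "Suc n" a b x] by (simp add: abs_mult)
  qed
qed

lemma box_integral_zero_if_test_integrals_zero:
  fixes h :: "'a::euclidean_space \<Rightarrow> real"
  assumes L: "L1_loc U h"
    and T: "\<And>\<phi>. test_fun U \<phi> \<Longrightarrow> (LINT x:U|lebesgue. h x * \<phi> x) = 0"
    and sub: "closure (box a b) \<subseteq> U"
  shows "(\<integral>x. indicator (box a b) x * h x \<partial>lebesgue) = 0"
proof -
  define K where "K = closure (box a b)"
  define hK where "hK x = indicator K x * h x" for x
  have "compact K"
    unfolding K_def by (simp add: compact_closure)
  then have int_hK: "integrable lebesgue hK"
    using L sub unfolding L1_loc_def set_integrable_def K_def hK_def by simp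
  have box_K: "box a b \<subseteq> K"
    unfolding K_def by (rule closure_subset)
  have "(\<lambda>x. hK x * box_bump (Suc n) a b x) = (\<lambda>x. indicator U x *\<^sub>R (h x * box_bump (Suc n) a b x))"
    for n
  proof (rule ext)
    fix x
    show "hK x * box_bump (Suc n) a b x = indicator U x *\<^sub>R (h x * box_bump (Suc n) a b x)"
    proof (cases "x \<in> box a b")
      case True
      with box_K sub have "x \<in> K" "x \<in> U"
        by (auto simp: K_def)
      then show ?thesis
        by (simp add: hK_def)
    next
      case False
      then show ?thesis
        using box_bump_neq_0_iff[of n a b x] by simp
    qed
  qed
  then have "(\<integral>x. hK x * box_bump (Suc n) a b x \<partial>lebesgue) = 0" for n
    using T test_fun_box_bump[OF sub] by (simp add: set_lebesgue_integral_def)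
  moreover have "(\<lambda>x. indicator (box a b) x * hK x) = (\<lambda>x. indicator (box a b) x * h x)"
  proof (rule ext)
    fix x
    show "indicator (box a b) x * hK x = indicator (box a b) x * h x"
      using box_K by (cases "x \<in> box a b") (auto simp: hK_def)
  qed
  ultimately show ?thesis
    using tendsto_integral_box_bump[OF int_hK, of a b] by (simp add: LIMSEQ_const_iff)
qed

lemma AE_zero_if_test_integrals_zero:
  fixes h :: "'a::euclidean_space \<Rightarrow> real"
  assumes U: "open U" and L: "L1_loc U h"
    and T: "\<And>\<phi>. test_fun U \<phi> \<Longrightarrow> (LINT x:U|lebesgue. h x * \<phi> x) = 0"
  shows "AE x in lebesgue. x \<in> U \<longrightarrow> h x = 0"
proof (rule AE_on_open_if_AE_on_boxes[OF U])
  fix c d :: 'a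
  assume cd: "closure (box c d) \<subseteq> U"
  have "integrable lebesgue (\<lambda>x. indicator (closure (box c d)) x * h x)"
    using L cd unfolding L1_loc_def set_integrable_def by (auto simp: compact_closure)
  from integrable_mult_indicator[OF _ this, of "box c d"]
  have "integrable lebesgue (\<lambda>x. indicator (box c d) x * (indicator (closure (box c d)) x * h x))"
    by simp
  moreover have "indicator (box c d) x * (indicator (closure (box c d)) x * h x)
      = indicator (box c d) x * h x" for x
    using closure_subset[of "box c d"] by (auto simp: indicator_def)
  ultimately have int: "integrable lebesgue (\<lambda>x. indicator (box c d) x * h x)"
    by simp
  have "AE x in lebesgue. indicator (box c d) x * h x = 0"
  proof (rule AE_zero_if_box_integrals_zero[OF int])
    fix a b :: 'a
    obtain a' b' where ab': "box a b \<inter> box c d = box a' b'"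
      using box_Int_box by blast
    then have "closure (box a' b') \<subseteq> U"
      using cd closure_mono[of "box a' b'" "box c d"] by blast
    then have "(\<integral>x. indicator (box a' b') x * h x \<partial>lebesgue) = 0"
      using box_integral_zero_if_test_integrals_zero[OF L T] by blast
    moreover have "(\<lambda>x. indicator (box a b) x * (indicator (box c d) x * h x))
        = (\<lambda>x. indicator (box a' b') x * h x)"
      using ab'[symmetric] by (auto simp: indicator_def fun_eq_iff)
    ultimately show "(\<integral>x. indicator (box a b) x * (indicator (box c d) x * h x) \<partial>lebesgue) = 0"
      by simp
  qed
  then show "AE x in lebesgue. x \<in> box c d \<longrightarrow> h x = 0"
    by (rule eventually_mono) (simp add: indicator_def)
qed

lemma weak_partial_subset:
  assumes D: "D \<subseteq> \<Omega>" and W: "weak_partial \<Omega> b u g"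
  shows "weak_partial D b u g"
  unfolding weak_partial_def
proof (intro allI impI)
  fix \<phi> assume T: "test_fun D \<phi>"
  have deriv_eq: "(\<lambda>x. indicator D x *\<^sub>R (u x * frechet_derivative \<phi> (at x) b))
      = (\<lambda>x. indicator \<Omega> x *\<^sub>R (u x * frechet_derivative \<phi> (at x) b))"
  proof (rule ext)
    fix x
    show "indicator D x *\<^sub>R (u x * frechet_derivative \<phi> (at x) b)
      = indicator \<Omega> x *\<^sub>R (u x * frechet_derivative \<phi> (at x) b)"
    proof (cases "x \<in> closure {x. \<phi> x \<noteq> 0}")
      case True
      then have "x \<in> D"
        using T unfolding test_fun_def by blast
      then show ?thesis
        using D by auto
    next
      case False
      then show ?thesis
        by (simp add: frechet_derivative_test_fun_outside_support)
    qed
  qed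
  have "(\<lambda>x. indicator D x *\<^sub>R (g x * \<phi> x)) = (\<lambda>x. indicator \<Omega> x *\<^sub>R (g x * \<phi> x))"
    using test_fun_support[OF T] D
    by (intro ext) (metis indicator_simps mult_eq_0_iff scale_zero_right subsetD)
  then show "(LINT x:D|lebesgue. u x * frechet_derivative \<phi> (at x) b)
      = - (LINT x:D|lebesgue. g x * \<phi> x)"
    using W test_fun_subset[OF T D] deriv_eq
    unfolding weak_partial_def set_lebesgue_integral_def by simp
qed

lemma weak_partial_unique:
  fixes g1 g2 :: "'a::euclidean_space \<Rightarrow> real"
  assumes D: "open D" and L1: "L1_loc D g1" and L2: "L1_loc D g2"
    and W1: "weak_partial D b u g1" and W2: "weak_partial D b u g2"
  shows "AE x in lebesgue. x \<in> D \<longrightarrow> g1 x = g2 x"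
proof -
  have "L1_loc D (\<lambda>x. g1 x - g2 x)"
    using L1 L2 unfolding L1_loc_def by auto
  moreover have "(LINT x:D|lebesgue. (g1 x - g2 x) * \<phi> x) = 0" if T: "test_fun D \<phi>" for \<phi>
  proof -
    have "(LINT x:D|lebesgue. (g1 x - g2 x) * \<phi> x)
        = (LINT x:D|lebesgue. g1 x * \<phi> x) - (LINT x:D|lebesgue. g2 x * \<phi> x)"
      unfolding left_diff_distrib
      by (rule set_integral_diff(2)[OF set_integrable_mult_test_fun[OF L1 T]
            set_integrable_mult_test_fun[OF L2 T]])
    also have "\<dots> = 0"
      using W1 W2 T unfolding weak_partial_def by (metis diff_self neg_equal_iff_equal)
    finally show ?thesis .
  qed
  ultimately have "AE x in lebesgue. x \<in> D \<longrightarrow> g1 x - g2 x = 0"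
    by (rule AE_zero_if_test_integrals_zero[OF D])
  then show ?thesis
    by (rule eventually_mono) simp
qed

lemma Lp_var_subset_const:
  assumes Lp: "Lp_var \<Omega> P f" and D: "D \<subseteq> \<Omega>" and q: "\<And>x. x \<in> D \<Longrightarrow> P x = q"
  shows "Lp_var D (\<lambda>_. q) f"
proof -
  have "set_nn_integral lebesgue D (\<lambda>x. ennreal (\<bar>f x\<bar> powr q))
      \<le> set_nn_integral lebesgue \<Omega> (\<lambda>x. ennreal (\<bar>f x\<bar> powr P x))"
    using D q by (intro nn_integral_mono) (auto simp: indicator_def)
  then show ?thesis
    using Lp D L1_loc_subset unfolding Lp_var_def by (auto simp: le_less_trans)
qed

lemma borel_measurable_powr_L1_loc:
  fixes f :: "'a::euclidean_space \<Rightarrow> real"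
  assumes A: "open A" "L1_loc A f" and Q: "Q \<in> borel_measurable lebesgue"
  shows "(\<lambda>x. ennreal (\<bar>f x\<bar> powr Q x) * indicator A x) \<in> borel_measurable lebesgue"
proof -
  have "(\<lambda>x. indicator A x * f x) \<in> borel_measurable lebesgue"
    by (rule L1_loc_borel_measurable[OF A])
  then have "(\<lambda>x. ennreal (\<bar>indicator A x * f x\<bar> powr Q x)) \<in> borel_measurable lebesgue"
    using Q by measurable
  moreover have "ennreal (\<bar>indicator A x * f x\<bar> powr Q x) = ennreal (\<bar>f x\<bar> powr Q x) * indicator A x"
    for x
    by (auto simp: indicator_def)
  ultimately show ?thesis by simp
qed

lemma powr_le_1_plus_powr:
  fixes t :: real
  assumes "0 \<le> t" "0 \<le> q" "q \<le> p"
  shows "t powr q \<le> 1 + t powr p"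
proof (cases "t \<le> 1")
  case True
  then have "t powr q \<le> 1"
    using assms(1) by (intro powr_le1[OF assms(2)]) simp
  then show ?thesis
    by (simp add: add_increasing2)
next
  case False
  then have "t powr q \<le> t powr p"
    by (intro powr_mono[OF assms(3)]) simp
  then show ?thesis
    by simp
qed

lemma Lp_var_lower_exponent:
  fixes f :: "'a::euclidean_space \<Rightarrow> real"
  assumes \<Omega>: "open \<Omega>" "emeasure lebesgue \<Omega> < \<infinity>" and Lp: "Lp_var \<Omega> P f"
    and P: "P \<in> borel_measurable lebesgue" and q: "0 \<le> q" "\<And>x. x \<in> \<Omega> \<Longrightarrow> q \<le> P x"
  shows "Lp_var \<Omega> (\<lambda>_. q) f"
proof -
  have L: "L1_loc \<Omega> f"
    and fin: "set_nn_integral lebesgue \<Omega> (\<lambda>x. ennreal (\<bar>f x\<bar> powr P x)) < \<infinity>"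
    using Lp unfolding Lp_var_def by auto
  have "set_nn_integral lebesgue \<Omega> (\<lambda>x. ennreal (\<bar>f x\<bar> powr q))
      \<le> (\<integral>\<^sup>+x. indicator \<Omega> x + ennreal (\<bar>f x\<bar> powr P x) * indicator \<Omega> x \<partial>lebesgue)"
  proof (intro nn_integral_mono)
    fix x
    show "ennreal (\<bar>f x\<bar> powr q) * indicator \<Omega> x
        \<le> indicator \<Omega> x + ennreal (\<bar>f x\<bar> powr P x) * indicator \<Omega> x"
    proof (cases "x \<in> \<Omega>")
      case True
      then have "\<bar>f x\<bar> powr q \<le> 1 + \<bar>f x\<bar> powr P x"
        using q by (intro powr_le_1_plus_powr) auto
      then have "ennreal (\<bar>f x\<bar> powr q) \<le> ennreal 1 + ennreal (\<bar>f x\<bar> powr P x)"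
        by (metis ennreal_leI ennreal_plus powr_ge_zero zero_le_one)
      with True show ?thesis
        by simp
    qed simp
  qed
  also have "\<dots> = emeasure lebesgue \<Omega> + set_nn_integral lebesgue \<Omega> (\<lambda>x. ennreal (\<bar>f x\<bar> powr P x))"
  proof -
    have "\<Omega> \<in> sets lebesgue"
      using \<Omega>(1) by auto
    then show ?thesis
      using borel_measurable_powr_L1_loc[OF \<Omega>(1) L P] by (subst nn_integral_add) auto
  qed
  also have "\<dots> < \<infinity>"
    using \<Omega>(2) fin by simp
  finally show ?thesis
    using L unfolding Lp_var_def by simp
qed

lemma two_phase_powr_le:
  fixes f f1 f2 :: "'a \<Rightarrow> real"
  assumes sub: "D1 \<subseteq> \<Omega>" "D2 \<subseteq> \<Omega>"
    and eq: "x \<in> D1 \<longrightarrow> f x = f1 x" "x \<in> D2 \<longrightarrow> f x = f2 x"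
  shows "ennreal (\<bar>f x\<bar> powr two_phase_exp D1 D2 p1 p2 x) * indicator \<Omega> x
    \<le> ennreal (\<bar>f1 x\<bar> powr p1) * indicator D1 x + ennreal (\<bar>f2 x\<bar> powr p2) * indicator D2 x
      + ennreal (\<bar>f x\<bar> powr min p1 p2) * indicator \<Omega> x"
proof -
  consider "x \<in> D1" | "x \<notin> D1" "x \<in> D2" | "x \<notin> D1" "x \<notin> D2"
    by blast
  then show ?thesis
  proof cases
    case 1
    with eq sub show ?thesis
      by (simp add: two_phase_exp_def subset_iff add.assoc add_increasing2)
  next
    case 2
    with eq sub show ?thesis
      by (simp add: two_phase_exp_def subset_iff add_increasing add_increasing2)
  next
    case 3
    then show ?thesis
      by (simp add: two_phase_exp_def add_increasing)
  qed
qed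

lemma Lp_var_two_phase_exp:
  fixes f f1 f2 :: "'a::euclidean_space \<Rightarrow> real"
  assumes open_sets: "open \<Omega>" "open D1" "open D2" and sub: "D1 \<subseteq> \<Omega>" "D2 \<subseteq> \<Omega>"
    and Lp1: "Lp_var D1 (\<lambda>_. p1) f1" and Lp2: "Lp_var D2 (\<lambda>_. p2) f2"
    and Lp: "Lp_var \<Omega> (\<lambda>_. min p1 p2) f"
    and eq1: "AE x in lebesgue. x \<in> D1 \<longrightarrow> f x = f1 x"
    and eq2: "AE x in lebesgue. x \<in> D2 \<longrightarrow> f x = f2 x"
  shows "Lp_var \<Omega> (two_phase_exp D1 D2 p1 p2) f"
proof -
  define G1 where "G1 x = ennreal (\<bar>f1 x\<bar> powr p1) * indicator D1 x" for x
  define G2 where "G2 x = ennreal (\<bar>f2 x\<bar> powr p2) * indicator D2 x" for x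
  define G where "G x = ennreal (\<bar>f x\<bar> powr min p1 p2) * indicator \<Omega> x" for x
  have "G1 \<in> borel_measurable lebesgue"
    using borel_measurable_powr_L1_loc[OF open_sets(2), of f1 "\<lambda>_. p1"] Lp1
    unfolding G1_def Lp_var_def by simp
  moreover have "G2 \<in> borel_measurable lebesgue"
    using borel_measurable_powr_L1_loc[OF open_sets(3), of f2 "\<lambda>_. p2"] Lp2
    unfolding G2_def Lp_var_def by simp
  moreover have "G \<in> borel_measurable lebesgue"
    using borel_measurable_powr_L1_loc[OF open_sets(1), of f "\<lambda>_. min p1 p2"] Lp
    unfolding G_def Lp_var_def by simp
  moreover have "AE x in lebesgue.
      ennreal (\<bar>f x\<bar> powr two_phase_exp D1 D2 p1 p2 x) * indicator \<Omega> x \<le> G1 x + G2 x + G x"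
    using eq1 eq2 unfolding G1_def G2_def G_def
    by eventually_elim (rule two_phase_powr_le[OF sub])
  ultimately have "set_nn_integral lebesgue \<Omega> (\<lambda>x. ennreal (\<bar>f x\<bar> powr two_phase_exp D1 D2 p1 p2 x))
      \<le> integral\<^sup>N lebesgue G1 + integral\<^sup>N lebesgue G2 + integral\<^sup>N lebesgue G"
    by (simp add: nn_integral_mono_AE flip: nn_integral_add)
  also have "\<dots> < \<infinity>"
    using Lp1 Lp2 Lp unfolding Lp_var_def G1_def G2_def G_def by simp
  finally show ?thesis
    using Lp unfolding Lp_var_def by simp
qed

lemma two_phase_exp_borel_measurable:
  assumes "D1 \<in> sets lebesgue" "D2 \<in> sets lebesgue"
  shows "two_phase_exp D1 D2 p1 p2 \<in> borel_measurable lebesgue"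
proof -
  have "(\<lambda>x. if x \<in> D1 then p1 else if x \<in> D2 then p2 else min p1 p2) \<in> borel_measurable lebesgue"
    using assms by (intro measurable_If_set measurable_const) auto
  then show ?thesis
    unfolding two_phase_exp_def[abs_def] .
qed

lemma W1p_var_imp_W1p_subset:
  assumes W: "W1p_var \<Omega> P u" and D: "D \<subseteq> \<Omega>" and q: "\<And>x. x \<in> D \<Longrightarrow> P x = q"
  shows "W1p D q u"
  unfolding W1p_def W1p_var_def
proof (intro conjI ballI)
  show "L1_loc D u"
    using W D L1_loc_subset unfolding W1p_var_def by blast
  have "Lp_var \<Omega> P u"
    using W unfolding W1p_var_def by blast
  then show "Lp_var D (\<lambda>_. q) u"
    using D q by (rule Lp_var_subset_const)
  fix b :: 'a assume "b \<in> Basis"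
  then obtain g where g: "L1_loc \<Omega> g" "weak_partial \<Omega> b u g" "Lp_var \<Omega> P g"
    using W unfolding W1p_var_def by blast
  show "\<exists>g. L1_loc D g \<and> weak_partial D b u g \<and> Lp_var D (\<lambda>_. q) g"
    using L1_loc_subset[OF g(1) D] weak_partial_subset[OF D g(2)] Lp_var_subset_const[OF g(3) D q]
    by blast
qed

lemma W1p_var_imp_W1p_lower_exponent:
  assumes W: "W1p_var \<Omega> P u" and \<Omega>: "open \<Omega>" "emeasure lebesgue \<Omega> < \<infinity>"
    and P: "P \<in> borel_measurable lebesgue" and q: "0 \<le> q" "\<And>x. x \<in> \<Omega> \<Longrightarrow> q \<le> P x"
  shows "W1p \<Omega> q u"
  unfolding W1p_def W1p_var_def
proof (intro conjI ballI)
  show "L1_loc \<Omega> u" "Lp_var \<Omega> (\<lambda>_. q) u"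
    using W Lp_var_lower_exponent[OF \<Omega> _ P q] unfolding W1p_var_def by auto
  fix b :: 'a assume "b \<in> Basis"
  then obtain g where g: "L1_loc \<Omega> g" "weak_partial \<Omega> b u g" "Lp_var \<Omega> P g"
    using W unfolding W1p_var_def by blast
  then show "\<exists>g. L1_loc \<Omega> g \<and> weak_partial \<Omega> b u g \<and> Lp_var \<Omega> (\<lambda>_. q) g"
    using Lp_var_lower_exponent[OF \<Omega> g(3) P q] by blast
qed

lemma W1p_var_two_phase_exp_if_W1p:
  assumes open_sets: "open \<Omega>" "open D1" "open D2" and sub: "D1 \<subseteq> \<Omega>" "D2 \<subseteq> \<Omega>"
    and W1: "W1p D1 p1 u" and W2: "W1p D2 p2 u" and W: "W1p \<Omega> (min p1 p2) u"
  shows "W1p_var \<Omega> (two_phase_exp D1 D2 p1 p2) u"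
  unfolding W1p_var_def
proof (intro conjI ballI)
  show "L1_loc \<Omega> u"
    using W unfolding W1p_def W1p_var_def by blast
  show "Lp_var \<Omega> (two_phase_exp D1 D2 p1 p2) u"
    using W W1 W2 unfolding W1p_def W1p_var_def
    by (intro Lp_var_two_phase_exp[OF open_sets sub]) auto
  fix b :: 'a assume b: "b \<in> Basis"
  obtain g where g: "L1_loc \<Omega> g" "weak_partial \<Omega> b u g" "Lp_var \<Omega> (\<lambda>_. min p1 p2) g"
    using W b unfolding W1p_def W1p_var_def by blast
  obtain g1 where g1: "L1_loc D1 g1" "weak_partial D1 b u g1" "Lp_var D1 (\<lambda>_. p1) g1"
    using W1 b unfolding W1p_def W1p_var_def by blast
  obtain g2 where g2: "L1_loc D2 g2" "weak_partial D2 b u g2" "Lp_var D2 (\<lambda>_. p2) g2"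
    using W2 b unfolding W1p_def W1p_var_def by blast
  have "AE x in lebesgue. x \<in> D1 \<longrightarrow> g x = g1 x"
    by (rule weak_partial_unique[OF open_sets(2) L1_loc_subset[OF g(1) sub(1)] g1(1)
          weak_partial_subset[OF sub(1) g(2)] g1(2)])
  moreover have "AE x in lebesgue. x \<in> D2 \<longrightarrow> g x = g2 x"
    by (rule weak_partial_unique[OF open_sets(3) L1_loc_subset[OF g(1) sub(2)] g2(1)
          weak_partial_subset[OF sub(2) g(2)] g2(2)])
  ultimately have "Lp_var \<Omega> (two_phase_exp D1 D2 p1 p2) g"
    by (rule Lp_var_two_phase_exp[OF open_sets sub g1(3) g2(3) g(3)])
  with g show "\<exists>g. L1_loc \<Omega> g \<and> weak_partial \<Omega> b u g \<and> Lp_var \<Omega> (two_phase_exp D1 D2 p1 p2) g"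
    by blast
qed

theorem mainTheorem1:
  fixes \<Omega> D1 D2 :: "'a::euclidean_space set"
    and p1 p2 :: real and u :: "'a \<Rightarrow> real"
  assumes "open \<Omega>" and "emeasure lebesgue \<Omega> < \<infinity>"
    and "D1 \<subseteq> \<Omega>" and "D2 \<subseteq> \<Omega>" and "open D1" and "open D2"
    and "interior (closure D1) = D1" and "interior (closure D2) = D2"
    and "D1 \<inter> D2 = {}" and "closure \<Omega> = closure D1 \<union> closure D2"
    and "1 \<le> p1" and "1 \<le> p2"
  shows "W1p_var \<Omega> (two_phase_exp D1 D2 p1 p2) u \<longleftrightarrow>
           (W1p D1 p1 u \<and> W1p D2 p2 u \<and> W1p \<Omega> (min p1 p2) u)"
proof
  assume W: "W1p_var \<Omega> (two_phase_exp D1 D2 p1 p2) u"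
  have "two_phase_exp D1 D2 p1 p2 \<in> borel_measurable lebesgue"
    using \<open>open D1\<close> \<open>open D2\<close> by (intro two_phase_exp_borel_measurable) auto
  then have "W1p \<Omega> (min p1 p2) u"
    using W1p_var_imp_W1p_lower_exponent[OF W \<open>open \<Omega>\<close> \<open>emeasure lebesgue \<Omega> < \<infinity>\<close>]
      \<open>1 \<le> p1\<close> \<open>1 \<le> p2\<close> by (auto simp: two_phase_exp_def)
  moreover have "W1p D1 p1 u"
    using W1p_var_imp_W1p_subset[OF W \<open>D1 \<subseteq> \<Omega>\<close>] by (simp add: two_phase_exp_def)
  moreover have "W1p D2 p2 u"
    by (rule W1p_var_imp_W1p_subset[OF W \<open>D2 \<subseteq> \<Omega>\<close>])
      (use \<open>D1 \<inter> D2 = {}\<close> in \<open>auto simp: two_phase_exp_def\<close>)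
  ultimately show "W1p D1 p1 u \<and> W1p D2 p2 u \<and> W1p \<Omega> (min p1 p2) u"
    by blast
next
  assume "W1p D1 p1 u \<and> W1p D2 p2 u \<and> W1p \<Omega> (min p1 p2) u"
  then show "W1p_var \<Omega> (two_phase_exp D1 D2 p1 p2) u"
    using W1p_var_two_phase_exp_if_W1p[OF \<open>open \<Omega>\<close> \<open>open D1\<close> \<open>open D2\<close> \<open>D1 \<subseteq> \<Omega>\<close> \<open>D2 \<subseteq> \<Omega>\<close>]
    by blast
qed

end
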